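(* Let $s\in(\tfrac12,1)$, $\alpha\in(0,1)$, $c>0$, let $e\in C^{\alpha}(\mathbb{R})$ be $2\pi$-periodic with $\bar e=\frac1{2\pi}\int_0^{2\pi}e>0$, and let $g\in C^{\alpha}((0,+\infty))$ satisfy (G1) $\limsup_{t\to+\infty}[g(t)+\bar e]<0$, and (G2) $\lim_{t\to0^+}g(t)=+\infty$ and $g$ is monotone near zero. Then there exist constants $R_1>R_0>0$ such that for every $\lambda\in(0,1)$ and every positive $2\pi$-periodic classical solution $u$ of $$(\Delta)^s u(t)+c\,u'(t)-\lambda g(u(t))=\lambda e(t),\qquad t\in\mathbb{R},$$ there exist $t_0,t_1\in[0,2\pi]$ with $u(t_0)>R_0$ and $u(t_1)<R_1$.
   Context: $(-\Delta)^s u(x)=C_{1,s}\,\mathrm{P.V.}\int_{\mathbb{R}}\frac{u(x)-u(z)}{|x-z|^{1+2s}}\,dz$ with $C_{1,s}=\left(\int_{\mathbb{R}}\frac{1-\cos\xi}{|\xi|^{1+2s}}d\xi\right)^{-1}$, and $(\Delta)^s u:=-(-\Delta)^s u$. A classical solution is a $C^{2s+\alpha}$ function satisfying the equation pointwise. *)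

theory Defs
  imports "HOL-Analysis.Analysis" "HOL-Library.Liminf_Limsup"
begin

definition hoelder_on :: "real \<Rightarrow> real set \<Rightarrow> (real \<Rightarrow> real) \<Rightarrow> bool" where
  "hoelder_on \<beta> S f \<longleftrightarrow> (\<forall>K. compact K \<and> K \<subseteq> S \<longrightarrow>
      (\<exists>C. \<forall>x\<in>K. \<forall>y\<in>K. \<bar>f x - f y\<bar> \<le> C * \<bar>x - y\<bar> powr \<beta>))"

text \<open>The space C^r(R), r > 0: with k = ceiling r - 1 and beta = r - k in (0,1],
  f is k times differentiable and its k-th derivative is locally beta-Hoelder.\<close>
definition C_hoelder :: "real \<Rightarrow> (real \<Rightarrow> real) \<Rightarrow> bool" where
  "C_hoelder r f \<longleftrightarrow>
     (let k = nat (\<lceil>r\<rceil> - 1) in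
       (\<forall>j<k. \<forall>x. ((deriv ^^ j) f has_real_derivative (deriv ^^ Suc j) f x) (at x)) \<and>
       hoelder_on (r - real k) UNIV ((deriv ^^ k) f))"

definition C1s :: "real \<Rightarrow> real" where
  "C1s s = 1 / integral UNIV (\<lambda>\<xi>. (1 - cos \<xi>) / \<bar>\<xi>\<bar> powr (1 + 2 * s))"

definition pv_trunc :: "real \<Rightarrow> (real \<Rightarrow> real) \<Rightarrow> real \<Rightarrow> real \<Rightarrow> real" where
  "pv_trunc s u x \<epsilon> = integral {z. \<epsilon> \<le> \<bar>x - z\<bar>} (\<lambda>z. (u x - u z) / \<bar>x - z\<bar> powr (1 + 2 * s))"

definition pv_exists :: "real \<Rightarrow> (real \<Rightarrow> real) \<Rightarrow> real \<Rightarrow> bool" where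
  "pv_exists s u x \<longleftrightarrow> (\<exists>L. (pv_trunc s u x \<longlongrightarrow> L) (at_right 0))"

text \<open>(-Delta)^s u (x).\<close>
definition frac_lap :: "real \<Rightarrow> (real \<Rightarrow> real) \<Rightarrow> real \<Rightarrow> real" where
  "frac_lap s u x = C1s s * Lim (at_right 0) (pv_trunc s u x)"

definition classical_solution ::
  "real \<Rightarrow> real \<Rightarrow> real \<Rightarrow> real \<Rightarrow> (real \<Rightarrow> real) \<Rightarrow> (real \<Rightarrow> real) \<Rightarrow> (real \<Rightarrow> real) \<Rightarrow> bool" where
  "classical_solution s \<alpha> c lam g e u \<longleftrightarrow>
     C_hoelder (2 * s + \<alpha>) u \<and>
     (\<forall>t. pv_exists s u t \<and>
          - frac_lap s u t + c * deriv u t - lam * g (u t) = lam * e t)"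

end

theory Submission
  imports Defs
begin

(* Integrating the equation over a period, c u' integrates to 0 and so does the nonlocal term:
   the truncated principal value at t equals the integral over h >= eps of the second difference
   2 u(t) - u(t+h) - u(t-h) against h^(-1-2s), and by periodicity every second difference has
   zero period integral. Exchanging the period integral with the limit eps -> 0 is dominated
   convergence, the dominating bound coming from |2 u(t) - u(t+h) - u(t-h)| <= C h^(1+beta) with
   beta > 2s - 1, a consequence of the C^(2s+alpha) regularity. Hence g(u) has period integral
   -2 pi mean(e) < 0. A positive solution staying below the level r under which g >= 0 would make
   that integral nonnegative, and one staying above the level R beyond which g + mean(e) <= l < 0
   would make it at most 2 pi l - 2 pi mean(e). *)

section \<open>Periodic functions\<close>

lemma reduce_mod_period:
  fixes x T :: real
  assumes "0 < T"
  shows "x - of_int \<lfloor>x / T\<rfloor> * T \<in> {0..T}"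
  using floor_divide_lower[OF assms, of x] floor_divide_upper[OF assms, of x]
  by (simp add: algebra_simps)

lemma periodic_add_int_mult:
  fixes u :: "real \<Rightarrow> 'a" and T :: real
  assumes per: "\<forall>t. u (t + T) = u t"
  shows "u (t + of_int n * T) = u t"
proof -
  have nat: "u (x + of_nat m * T) = u x" for x m
  proof (induction m)
    case (Suc m)
    have "x + of_nat (Suc m) * T = (x + of_nat m * T) + T"
      by (simp add: algebra_simps)
    then show ?case
      using per Suc by metis
  qed simp
  show ?thesis
  proof (cases "0 \<le> n")
    case True
    then show ?thesis
      using nat[of t "nat n"] by simp
  next
    case False
    then show ?thesis
      using nat[of "t + of_int n * T" "nat (- n)"] by simp
  qed
qed

lemma periodic_range:
  fixes u :: "real \<Rightarrow> 'a" and T :: real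
  assumes per: "\<forall>t. u (t + T) = u t" and T: "0 < T"
  shows "range u = u ` {0..T}"
proof -
  have "u x \<in> u ` {0..T}" for x
    using periodic_add_int_mult[OF per, of "x - of_int \<lfloor>x / T\<rfloor> * T" "\<lfloor>x / T\<rfloor>"]
      reduce_mod_period[OF T, of x]
    by (metis diff_add_cancel image_eqI)
  then show ?thesis
    by auto
qed

lemma periodic_continuous_bounded:
  fixes u :: "real \<Rightarrow> real"
  assumes per: "\<forall>t. u (t + T) = u t" and T: "0 < T" and cont: "continuous_on UNIV u"
  obtains M where "\<forall>x. \<bar>u x\<bar> \<le> M"
proof -
  have "compact (u ` {0..T})"
    by (rule compact_continuous_image[OF continuous_on_subset[OF cont]]) auto
  then obtain M where "\<forall>y\<in>u ` {0..T}. \<bar>y\<bar> \<le> M"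
    by (metis bounded_real compact_imp_bounded)
  then show ?thesis
    using that periodic_range[OF per T] by (metis rangeI)
qed

lemma periodic_integral_shift:
  fixes u :: "real \<Rightarrow> real"
  assumes per: "\<forall>t. u (t + T) = u t" and T: "0 < T" and cont: "continuous_on UNIV u"
  shows "integral {0..T} (\<lambda>t. u (t + h)) = integral {0..T} u"
proof -
  define n where "n = \<lfloor>h / T\<rfloor>"
  define a where "a = h - of_int n * T"
  have a: "0 \<le> a" "a \<le> T"
    using reduce_mod_period[OF T, of h] unfolding a_def n_def by auto
  have shift: "(\<lambda>t. u (t + h)) = (\<lambda>t. u (t + a))"
    using periodic_add_int_mult[OF per, of "_ + a" n] unfolding a_def by (simp add: algebra_simps)
  have int: "u integrable_on {x..y}" for x y
    using cont by (intro integrable_continuous_interval) (auto intro: continuous_on_subset)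
  have "integral {0..T} (\<lambda>t. u (t + a)) = integral {a..T + a} u"
    using integral_shift_Icc_real[of 0 T u a] by (simp add: o_def add.commute)
  also have "\<dots> = integral {a..T} u + integral {T..T + a} u"
    using a by (intro Henstock_Kurzweil_Integration.integral_combine[symmetric] int) auto
  also have "integral {T..T + a} u = integral {0..a} (\<lambda>t. u (t + T))"
    using integral_shift_Icc_real[of 0 a u T] by (simp add: o_def add.commute)
  also have "\<dots> = integral {0..a} u"
    using per by simp
  also have "integral {a..T} u + integral {0..a} u = integral {0..T} u"
    using a by (subst add.commute, intro Henstock_Kurzweil_Integration.integral_combine int) auto
  finally show ?thesis
    unfolding shift .
qed

lemma periodic_derivative_integral:
  fixes u u' :: "real \<Rightarrow> real"
  assumes per: "\<forall>t. u (t + T) = u t" and T: "0 < T"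
    and der: "\<And>x. (u has_real_derivative u' x) (at x)"
  shows "(u' has_integral 0) {0..T}"
proof -
  have "(u' has_integral (u T - u 0)) {0..T}"
    using T der
    by (intro fundamental_theorem_of_calculus)
       (auto simp: has_real_derivative_iff_has_vector_derivative[symmetric] intro: has_field_derivative_at_within)
  then show ?thesis
    using per[rule_format, of 0] by simp
qed

section \<open>Regularity of $C^{2s+\alpha}$ functions\<close>

lemma hoelder_on_nonneg_const:
  assumes "hoelder_on \<beta> S f" "compact K" "K \<subseteq> S"
  obtains C where "0 \<le> C" "\<forall>x\<in>K. \<forall>y\<in>K. \<bar>f x - f y\<bar> \<le> C * \<bar>x - y\<bar> powr \<beta>"
proof -
  obtain C where C: "\<forall>x\<in>K. \<forall>y\<in>K. \<bar>f x - f y\<bar> \<le> C * \<bar>x - y\<bar> powr \<beta>"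
    using assms unfolding hoelder_on_def by blast
  have "C * \<bar>x - y\<bar> powr \<beta> \<le> max C 0 * \<bar>x - y\<bar> powr \<beta>" for x y
    by (intro mult_right_mono) auto
  then show ?thesis
    using that[of "max C 0"] C by (meson max.cobounded2 order_trans)
qed

lemma hoelder_on_1_if_derivative_hoelder:
  fixes f f' :: "real \<Rightarrow> real"
  assumes der: "\<And>x. (f has_real_derivative f' x) (at x)"
    and hol: "hoelder_on \<gamma> UNIV f'" and \<gamma>: "0 \<le> \<gamma>"
  shows "hoelder_on 1 UNIV f"
  unfolding hoelder_on_def
proof (intro allI impI)
  fix K :: "real set"
  assume "compact K \<and> K \<subseteq> UNIV"
  then obtain a b where K: "K \<subseteq> {a..b}"
    by (metis bounded_subset_cbox_symmetric compact_imp_bounded interval_cbox)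
  obtain C where C: "\<forall>x\<in>{a..b}. \<forall>y\<in>{a..b}. \<bar>f' x - f' y\<bar> \<le> C * \<bar>x - y\<bar> powr \<gamma>"
    using hol unfolding hoelder_on_def by (meson compact_Icc subset_UNIV)
  define B where "B = \<bar>f' a\<bar> + \<bar>C\<bar> * \<bar>b - a\<bar> powr \<gamma>"
  have f'_bound: "\<bar>f' z\<bar> \<le> B" if "z \<in> {a..b}" for z
  proof -
    have "\<bar>f' z - f' a\<bar> \<le> C * \<bar>z - a\<bar> powr \<gamma>"
      using C[rule_format, of z a] that by auto
    also have "\<dots> \<le> \<bar>C\<bar> * \<bar>b - a\<bar> powr \<gamma>"
      using that \<gamma> by (intro mult_mono powr_mono2) auto
    finally show ?thesis
      unfolding B_def by linarith
  qed
  have lipschitz: "\<bar>f x - f y\<bar> \<le> B * \<bar>x - y\<bar>" if "x \<in> {a..b}" "y \<in> {a..b}" "y < x" for x y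
  proof -
    obtain z where "y < z" "z < x" "f x - f y = (x - y) * f' z"
      using MVT2[of y x f f'] der \<open>y < x\<close> by blast
    moreover have "\<bar>f' z\<bar> \<le> B"
      using f'_bound \<open>y < z\<close> \<open>z < x\<close> that by auto
    ultimately show ?thesis
      by (simp add: abs_mult mult.commute mult_left_mono)
  qed
  have "\<bar>f x - f y\<bar> \<le> B * \<bar>x - y\<bar> powr 1" if "x \<in> K" "y \<in> K" for x y
  proof -
    have "x \<in> {a..b}" "y \<in> {a..b}"
      using K that by auto
    then show ?thesis
      using lipschitz[of x y] lipschitz[of y x]
      by (cases x y rule: linorder_cases) (auto simp: abs_minus_commute)
  qed
  then show "\<exists>B. \<forall>x\<in>K. \<forall>y\<in>K. \<bar>f x - f y\<bar> \<le> B * \<bar>x - y\<bar> powr 1"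
    by blast
qed

lemma C_hoelder_derivative:
  fixes u :: "real \<Rightarrow> real"
  assumes u: "C_hoelder r u" and r: "1 < r" "r \<le> 3"
  shows "\<And>x. (u has_real_derivative deriv u x) (at x)"
    and "hoelder_on (min (r - 1) 1) UNIV (deriv u)"
proof -
  define k where "k = nat (\<lceil>r\<rceil> - 1)"
  have k: "if r \<le> 2 then k = 1 else k = 2"
  proof -
    have "\<lceil>r\<rceil> = (if r \<le> 2 then 2 else 3)"
      using r by (intro ceiling_unique) auto
    then show ?thesis
      unfolding k_def by simp
  qed
  have derivs: "\<forall>j<k. \<forall>x. ((deriv ^^ j) u has_real_derivative (deriv ^^ Suc j) u x) (at x)"
    and hol: "hoelder_on (r - real k) UNIV ((deriv ^^ k) u)"
    using u unfolding C_hoelder_def k_def Let_def by auto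
  show "(u has_real_derivative deriv u x) (at x)" for x
    using derivs[rule_format, of 0 x] k by (simp split: if_splits)
  show "hoelder_on (min (r - 1) 1) UNIV (deriv u)"
  proof (cases "r \<le> 2")
    case True
    then show ?thesis
      using hol k by simp
  next
    case False
    then have "k = 2"
      using k by simp
    have "(deriv u has_real_derivative deriv (deriv u) x) (at x)" for x
      using derivs[rule_format, of 1 x] \<open>k = 2\<close> by simp
    moreover have "hoelder_on (r - 2) UNIV (deriv (deriv u))"
      using hol \<open>k = 2\<close> by (simp add: numeral_2_eq_2)
    ultimately have "hoelder_on 1 UNIV (deriv u)"
      using False by (intro hoelder_on_1_if_derivative_hoelder) auto
    then show ?thesis
      using False by simp
  qed
qed

definition second_difference :: "(real \<Rightarrow> real) \<Rightarrow> real \<Rightarrow> real \<Rightarrow> real" where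
  "second_difference u t h = 2 * u t - u (t + h) - u (t - h)"

lemma second_difference_bound:
  assumes "\<forall>x. \<bar>u x\<bar> \<le> M"
  shows "\<bar>second_difference u t h\<bar> \<le> 4 * M"
  using assms[rule_format, of t] assms[rule_format, of "t + h"] assms[rule_format, of "t - h"]
  unfolding second_difference_def by linarith

lemma second_difference_hoelder_bound:
  fixes u u' :: "real \<Rightarrow> real"
  assumes der: "\<And>x. (u has_real_derivative u' x) (at x)"
    and hol: "\<forall>x\<in>{a..b}. \<forall>y\<in>{a..b}. \<bar>u' x - u' y\<bar> \<le> C * \<bar>x - y\<bar> powr \<beta>"
    and C: "0 \<le> C" and \<beta>: "0 \<le> \<beta>" and h: "0 < h" and ab: "a \<le> t - h" "t + h \<le> b"
  shows "\<bar>second_difference u t h\<bar> \<le> C * 2 powr \<beta> * h powr (1 + \<beta>)"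
proof -
  obtain z1 where z1: "t < z1" "z1 < t + h" "u (t + h) - u t = h * u' z1"
    using MVT2[of t "t + h" u u'] der h by auto
  obtain z2 where z2: "t - h < z2" "z2 < t" "u t - u (t - h) = h * u' z2"
    using MVT2[of "t - h" t u u'] der h by auto
  have "second_difference u t h = h * (u' z2 - u' z1)"
    using z1 z2 unfolding second_difference_def by (simp add: algebra_simps)
  then have "\<bar>second_difference u t h\<bar> = h * \<bar>u' z2 - u' z1\<bar>"
    using h by (simp add: abs_mult)
  also have "\<bar>u' z2 - u' z1\<bar> \<le> C * \<bar>z2 - z1\<bar> powr \<beta>"
    using hol[rule_format, of z2 z1] z1 z2 ab by auto
  also have "\<bar>z2 - z1\<bar> powr \<beta> \<le> (2 * h) powr \<beta>"
    using z1 z2 \<beta> by (intro powr_mono2) auto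
  finally have "\<bar>second_difference u t h\<bar> \<le> h * (C * (2 * h) powr \<beta>)"
    using h C by (simp add: mult_left_mono)
  also have "\<dots> = C * 2 powr \<beta> * h powr (1 + \<beta>)"
    using h by (simp add: powr_mult powr_add)
  finally show ?thesis .
qed

section \<open>Integrals against the kernel $h^{-p}$ on half-lines\<close>

lemma absolutely_integrable_atLeast_split:
  fixes f :: "real \<Rightarrow> real"
  assumes f: "f absolutely_integrable_on {a..}" and ab: "a \<le> b"
  shows "f integrable_on {a..b}" "f integrable_on {b..}"
    "integral {a..} f = integral {a..b} f + integral {b..} f"
proof -
  show ab_int: "f integrable_on {a..b}"
    using f by (intro integrable_on_subinterval[of _ "{a..}"])
      (auto dest: set_lebesgue_integral_eq_integral(1))
  have "f absolutely_integrable_on {b..}"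
    using f by (rule set_integrable_subset) (use ab in auto)
  then show b_int: "f integrable_on {b..}"
    by (rule set_lebesgue_integral_eq_integral(1))
  have "(f has_integral (integral {a..b} f + integral {b..} f)) ({a..b} \<union> {b..})"
    using ab by (intro has_integral_Un integrable_integral ab_int b_int) (auto simp: Int_atLeastAtMost)
  moreover have "{a..b} \<union> {b..} = {a..}"
    using ab by auto
  ultimately show "integral {a..} f = integral {a..b} f + integral {b..} f"
    by (metis integral_unique)
qed

lemma bounded_continuous_powr_absolutely_integrable:
  fixes v :: "real \<Rightarrow> real"
  assumes cont: "continuous_on {a..} v" and bound: "\<And>h. a \<le> h \<Longrightarrow> \<bar>v h\<bar> \<le> M"
    and a: "0 < a" and p: "1 < p"
  shows "(\<lambda>h. v h * h powr (-p)) absolutely_integrable_on {a..}"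
proof (rule measurable_bounded_by_integrable_imp_absolutely_integrable)
  show "(\<lambda>h. v h * h powr (-p)) \<in> borel_measurable (lebesgue_on {a..})"
    using a by (intro continuous_imp_measurable_on_sets_lebesgue continuous_intros cont) auto
  have "(\<lambda>h. h powr (-p)) integrable_on {a..}"
    using has_integral_powr_to_inf[of "-p" a] a p by (auto simp: integrable_on_def)
  then show "(\<lambda>h. M * h powr (-p)) integrable_on {a..}"
    by (rule integrable_on_mult_right)
  show "norm (v h * h powr (-p)) \<le> M * h powr (-p)" if "h \<in> {a..}" for h
    using bound[of h] that by (simp add: abs_mult mult_right_mono)
qed auto

lemma integral_atLeast_powr_bound:
  fixes F :: "real \<Rightarrow> real"
  assumes F: "F integrable_on {a..}" and bound: "\<And>h. a \<le> h \<Longrightarrow> \<bar>F h\<bar> \<le> M * h powr (-p)"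
    and a: "0 < a" and p: "1 < p"
  shows "\<bar>integral {a..} F\<bar> \<le> M * a powr (1 - p) / (p - 1)"
proof -
  have "- (a powr (- p + 1)) / (- p + 1) = a powr (1 - p) / (p - 1)"
    using p by (simp add: field_simps)
  then have "((\<lambda>h. h powr (-p)) has_integral a powr (1 - p) / (p - 1)) {a..}"
    using has_integral_powr_to_inf[of "-p" a] a p by simp
  then have G: "((\<lambda>h. M * h powr (-p)) has_integral M * (a powr (1 - p) / (p - 1))) {a..}"
    by (rule has_integral_mult_right)
  have "norm (integral {a..} F) \<le> integral {a..} (\<lambda>h. M * h powr (-p))"
    using F G bound by (intro Henstock_Kurzweil_Integration.integral_norm_bound_integral) auto
  then show ?thesis
    using integral_unique[OF G] by simp
qed

lemma integral_Icc_powr_bound: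
  fixes F :: "real \<Rightarrow> real"
  assumes F: "F integrable_on {\<epsilon>..1}" and bound: "\<And>h. \<epsilon> \<le> h \<Longrightarrow> h \<le> 1 \<Longrightarrow> \<bar>F h\<bar> \<le> K * h powr a"
    and \<epsilon>: "0 < \<epsilon>" and a: "-1 < a" and K: "0 \<le> K"
  shows "\<bar>integral {\<epsilon>..1} F\<bar> \<le> K / (a + 1)"
proof -
  have G: "((\<lambda>h. K * h powr a) has_integral K * (1 / (a + 1))) {0..1}"
    using has_integral_powr_from_0[OF a, of 1] by (intro has_integral_mult_right) simp
  have G_int: "(\<lambda>h. K * h powr a) integrable_on {\<epsilon>..1}"
    using \<epsilon> by (intro integrable_continuous_interval continuous_intros) auto
  have "norm (integral {\<epsilon>..1} F) \<le> integral {\<epsilon>..1} (\<lambda>h. K * h powr a)"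
    using F G_int bound by (intro Henstock_Kurzweil_Integration.integral_norm_bound_integral) auto
  also have "\<dots> \<le> integral {0..1} (\<lambda>h. K * h powr a)"
    using G G_int \<epsilon> K by (intro integral_subset_le) auto
  finally show ?thesis
    using integral_unique[OF G] by simp
qed

lemma integral_powr_kernel_bound:
  fixes D :: "real \<Rightarrow> real"
  assumes p: "1 < p" and \<beta>: "p - 2 < \<beta>" and K: "0 \<le> K"
    and D_bound: "\<And>h. \<bar>D h\<bar> \<le> M"
    and D_near_0: "\<And>h. 0 < h \<Longrightarrow> h \<le> 1 \<Longrightarrow> \<bar>D h\<bar> \<le> K * h powr (1 + \<beta>)"
    and F: "(\<lambda>h. D h * h powr (-p)) absolutely_integrable_on {\<epsilon>..}"
    and \<epsilon>: "0 < \<epsilon>" "\<epsilon> \<le> 1"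
  shows "\<bar>integral {\<epsilon>..} (\<lambda>h. D h * h powr (-p))\<bar> \<le> K / (2 + \<beta> - p) + M / (p - 1)"
proof -
  note split = absolutely_integrable_atLeast_split[OF F \<epsilon>(2)]
  have "\<bar>integral {\<epsilon>..1} (\<lambda>h. D h * h powr (-p))\<bar> \<le> K / ((1 + \<beta> - p) + 1)"
  proof (rule integral_Icc_powr_bound[OF split(1) _ \<epsilon>(1) _ K])
    fix h assume h: "\<epsilon> \<le> h" "h \<le> 1"
    then have "\<bar>D h * h powr (-p)\<bar> \<le> K * h powr (1 + \<beta>) * h powr (-p)"
      using D_near_0[of h] \<epsilon> by (simp add: abs_mult mult_right_mono)
    also have "\<dots> = K * h powr (1 + \<beta> - p)"
      using h \<epsilon> by (simp add: powr_add[symmetric] mult.assoc)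
    finally show "\<bar>D h * h powr (-p)\<bar> \<le> K * h powr (1 + \<beta> - p)" .
  qed (use \<beta> in auto)
  moreover have "\<bar>integral {1..} (\<lambda>h. D h * h powr (-p))\<bar> \<le> M * 1 powr (1 - p) / (p - 1)"
    using split(2) D_bound p by (intro integral_atLeast_powr_bound) (auto simp: abs_mult mult_right_mono)
  ultimately show ?thesis
    using split(3) by (simp add: add_diff_eq)
qed

section \<open>The truncated principal value\<close>

lemma has_integral_affine_atLeast:
  fixes f :: "real \<Rightarrow> real"
  assumes f: "(\<lambda>h. f (t + m * h)) absolutely_integrable_on {a..}" and m: "\<bar>m\<bar> = 1"
  shows "(f has_integral integral {a..} (\<lambda>h. f (t + m * h))) ((\<lambda>h. t + m * h) ` {a..})"
proof -
  have "f absolutely_integrable_on (\<lambda>h. t + m * h) ` {a..} \<and>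
      integral ((\<lambda>h. t + m * h) ` {a..}) f = integral {a..} (\<lambda>h. f (t + m * h))"
  proof (rule has_absolute_integral_change_of_variables_1'[THEN iffD1])
    show "((\<lambda>h. t + m * h) has_real_derivative m) (at x within {a..})" for x
      by (auto intro!: derivative_eq_intros)
    show "inj_on (\<lambda>h. t + m * h) {a..}"
      using m by (auto simp: inj_on_def)
  qed (use f m in auto)
  then show ?thesis
    by (metis set_lebesgue_integral_eq_integral(1) integrable_integral)
qed

lemma second_difference_kernel_absolutely_integrable:
  fixes u :: "real \<Rightarrow> real"
  assumes cont: "continuous_on UNIV u" and bnd: "\<forall>x. \<bar>u x\<bar> \<le> M" and p: "1 < p" and \<epsilon>: "0 < \<epsilon>"
  shows "(\<lambda>h. second_difference u t h * h powr (-p)) absolutely_integrable_on {\<epsilon>..}"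
proof (rule bounded_continuous_powr_absolutely_integrable[OF _ _ \<epsilon> p])
  show "continuous_on {\<epsilon>..} (second_difference u t)"
    unfolding second_difference_def
    by (intro continuous_intros continuous_on_compose2[OF cont _ subset_UNIV])
  show "\<bar>second_difference u t h\<bar> \<le> 4 * M" for h
    using bnd by (rule second_difference_bound)
qed

lemma has_integral_outside_interval:
  fixes G :: "real \<Rightarrow> real"
  assumes right: "(\<lambda>h. G (t + h)) absolutely_integrable_on {\<epsilon>..}"
    and left: "(\<lambda>h. G (t - h)) absolutely_integrable_on {\<epsilon>..}" and \<epsilon>: "0 < \<epsilon>"
  shows "(G has_integral integral {\<epsilon>..} (\<lambda>h. G (t + h) + G (t - h))) {z. \<epsilon> \<le> \<bar>t - z\<bar>}"
proof -
  have "(G has_integral integral {\<epsilon>..} (\<lambda>h. G (t + 1 * h))) ((\<lambda>h. t + 1 * h) ` {\<epsilon>..})"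
    using right by (intro has_integral_affine_atLeast) simp_all
  moreover have "(\<lambda>h. t + 1 * h) ` {\<epsilon>..} = {t + \<epsilon>..}"
    by (auto simp: image_iff intro!: bexI[of _ "_ - t"])
  moreover have "(G has_integral integral {\<epsilon>..} (\<lambda>h. G (t + -1 * h))) ((\<lambda>h. t + -1 * h) ` {\<epsilon>..})"
    using left by (intro has_integral_affine_atLeast) simp_all
  moreover have "(\<lambda>h. t + -1 * h) ` {\<epsilon>..} = {..t - \<epsilon>}"
    by (auto simp: image_iff intro!: bexI[of _ "t - _"])
  ultimately have "(G has_integral integral {\<epsilon>..} (\<lambda>h. G (t + h)) + integral {\<epsilon>..} (\<lambda>h. G (t - h)))
      ({t + \<epsilon>..} \<union> {..t - \<epsilon>})"
    using \<epsilon> by (intro has_integral_Un) (auto intro: negligible_subset[OF negligible_empty])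
  moreover have "{t + \<epsilon>..} \<union> {..t - \<epsilon>} = {z. \<epsilon> \<le> \<bar>t - z\<bar>}"
    by auto
  moreover have "integral {\<epsilon>..} (\<lambda>h. G (t + h)) + integral {\<epsilon>..} (\<lambda>h. G (t - h))
      = integral {\<epsilon>..} (\<lambda>h. G (t + h) + G (t - h))"
    using right left by (intro integral_add[symmetric]) (auto dest: set_lebesgue_integral_eq_integral(1))
  ultimately show ?thesis
    by simp
qed

lemma pv_trunc_eq_integral_second_difference:
  fixes u :: "real \<Rightarrow> real"
  assumes cont: "continuous_on UNIV u" and bnd: "\<forall>x. \<bar>u x\<bar> \<le> M" and s: "0 < s" and \<epsilon>: "0 < \<epsilon>"
  shows "pv_trunc s u t \<epsilon> = integral {\<epsilon>..} (\<lambda>h. second_difference u t h * h powr (-(1 + 2 * s)))"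
proof -
  define p where "p = 1 + 2 * s"
  have p: "1 < p"
    using s unfolding p_def by simp
  define G where "G z = (u t - u z) / \<bar>t - z\<bar> powr p" for z
  have G_affine: "G (t + m * h) = (u t - u (t + m * h)) * h powr (-p)" if "\<bar>m\<bar> = 1" "\<epsilon> \<le> h" for m h
    using that \<epsilon> by (simp add: G_def abs_mult powr_minus_divide)
  have G_int: "(\<lambda>h. G (t + m * h)) absolutely_integrable_on {\<epsilon>..}" if m: "\<bar>m\<bar> = 1" for m
  proof -
    have "(\<lambda>h. (u t - u (t + m * h)) * h powr (-p)) absolutely_integrable_on {\<epsilon>..}"
    proof (rule bounded_continuous_powr_absolutely_integrable[OF _ _ \<epsilon> p])
      show "continuous_on {\<epsilon>..} (\<lambda>h. u t - u (t + m * h))"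
        by (intro continuous_intros continuous_on_compose2[OF cont _ subset_UNIV])
      show "\<bar>u t - u (t + m * h)\<bar> \<le> 2 * M" for h
        using bnd[rule_format, of t] bnd[rule_format, of "t + m * h"] by linarith
    qed
    then show ?thesis
      by (rule absolutely_integrable_spike[OF _ negligible_empty]) (simp add: G_affine m)
  qed
  have "pv_trunc s u t \<epsilon> = integral {\<epsilon>..} (\<lambda>h. G (t + h) + G (t - h))"
    using has_integral_outside_interval[where G = G, OF _ _ \<epsilon>] G_int[of 1] G_int[of "-1"]
    unfolding pv_trunc_def p_def[symmetric] G_def[symmetric] by (simp add: integral_unique)
  also have "\<dots> = integral {\<epsilon>..} (\<lambda>h. second_difference u t h * h powr (-p))"
  proof (rule integral_cong)
    fix h :: real
    assume "h \<in> {\<epsilon>..}"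
    then show "G (t + h) + G (t - h) = second_difference u t h * h powr (-p)"
      using G_affine[of 1 h] G_affine[of "-1" h] by (simp add: second_difference_def algebra_simps)
  qed
  finally show ?thesis
    unfolding p_def .
qed

lemma period_integral_second_difference:
  fixes u :: "real \<Rightarrow> real"
  assumes per: "\<forall>t. u (t + T) = u t" and T: "0 < T" and cont: "continuous_on UNIV u"
  shows "integral {0..T} (\<lambda>t. second_difference u t h) = 0"
proof -
  have int: "(\<lambda>t. u (t + c)) integrable_on {0..T}" for c
    by (intro integrable_continuous_interval continuous_on_compose2[OF cont _ subset_UNIV]
        continuous_intros)
  have "((\<lambda>t. 2 * u (t + 0) - u (t + h) - u (t + - h)) has_integral
      2 * integral {0..T} (\<lambda>t. u (t + 0)) - integral {0..T} (\<lambda>t. u (t + h))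
        - integral {0..T} (\<lambda>t. u (t + - h))) {0..T}"
    by (intro has_integral_diff has_integral_mult_right integrable_integral int)
  then show ?thesis
    unfolding periodic_integral_shift[OF per T cont] second_difference_def
    by (simp add: integral_unique)
qed

lemma period_integral_truncated_kernel:
  fixes u :: "real \<Rightarrow> real"
  assumes per: "\<forall>t. u (t + T) = u t" and T: "0 < T" and cont: "continuous_on UNIV u"
    and a: "0 < a"
  shows "continuous_on {0..T} (\<lambda>t. integral {a..b} (\<lambda>h. second_difference u t h * h powr (-p)))"
    and "integral {0..T} (\<lambda>t. integral {a..b} (\<lambda>h. second_difference u t h * h powr (-p))) = 0"
proof -
  have F: "continuous_on ({0..T} \<times> {a..b}) (\<lambda>(t, h). second_difference u t h * h powr (-p))"
  proof -
    have "continuous_on ({0..T} \<times> {a..b})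
        (\<lambda>z. (2 * u (fst z) - u (fst z + snd z) - u (fst z - snd z)) * snd z powr (-p))"
      using a by (intro continuous_intros continuous_on_compose2[OF cont _ subset_UNIV]) auto
    then show ?thesis
      by (simp add: second_difference_def split_def)
  qed
  then show "continuous_on {0..T} (\<lambda>t. integral {a..b} (\<lambda>h. second_difference u t h * h powr (-p)))"
    using integral_continuous_on_param[of "{0..T}" a b "\<lambda>t h. second_difference u t h * h powr (-p)"]
    by (simp add: cbox_interval)
  have "integral {0..T} (\<lambda>t. integral {a..b} (\<lambda>h. second_difference u t h * h powr (-p)))
      = integral {a..b} (\<lambda>h. integral {0..T} (\<lambda>t. second_difference u t h) * h powr (-p))"
  proof -
    have "continuous_on (cbox (0, a) (T, b)) (\<lambda>(t, h). second_difference u t h * h powr (-p))"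
      using F unfolding cbox_Pair_eq by (simp only: cbox_interval)
    from integral_swap_continuous[OF this] show ?thesis
      by (simp add: cbox_interval)
  qed
  also have "\<dots> = 0"
    by (simp add: period_integral_second_difference[OF per T cont])
  finally show "integral {0..T} (\<lambda>t. integral {a..b} (\<lambda>h. second_difference u t h * h powr (-p))) = 0" .
qed

lemma pv_trunc_bound:
  fixes u u' :: "real \<Rightarrow> real"
  assumes cont: "continuous_on UNIV u" and bnd: "\<forall>x. \<bar>u x\<bar> \<le> M"
    and der: "\<And>x. (u has_real_derivative u' x) (at x)"
    and hol: "\<forall>x\<in>{a..b}. \<forall>y\<in>{a..b}. \<bar>u' x - u' y\<bar> \<le> C * \<bar>x - y\<bar> powr \<beta>" and C: "0 \<le> C"
    and ab: "a \<le> t - 1" "t + 1 \<le> b"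
    and \<beta>: "2 * s - 1 < \<beta>" and s: "1/2 < s" and \<epsilon>: "0 < \<epsilon>" "\<epsilon> \<le> 1"
  shows "\<bar>pv_trunc s u t \<epsilon>\<bar> \<le> C * 2 powr \<beta> / (1 + \<beta> - 2 * s) + 4 * M / (2 * s)"
proof -
  have "\<bar>integral {\<epsilon>..} (\<lambda>h. second_difference u t h * h powr (-(1 + 2 * s)))\<bar>
      \<le> C * 2 powr \<beta> / (2 + \<beta> - (1 + 2 * s)) + 4 * M / ((1 + 2 * s) - 1)"
  proof (rule integral_powr_kernel_bound[OF _ _ _ second_difference_bound[OF bnd] _ _ \<epsilon>])
    show "\<bar>second_difference u t h\<bar> \<le> C * 2 powr \<beta> * h powr (1 + \<beta>)" if "0 < h" "h \<le> 1" for h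
      using that ab s \<beta> by (intro second_difference_hoelder_bound[OF der hol C]) auto
    show "(\<lambda>h. second_difference u t h * h powr (-(1 + 2 * s))) absolutely_integrable_on {\<epsilon>..}"
      using s \<epsilon> by (intro second_difference_kernel_absolutely_integrable[OF cont bnd]) auto
    show "1 < 1 + 2 * s" "1 + 2 * s - 2 < \<beta>" "0 \<le> C * 2 powr \<beta>"
      using s \<beta> C by auto
  qed
  then show ?thesis
    using s \<epsilon> by (simp add: pv_trunc_eq_integral_second_difference[OF cont bnd] add_diff_eq)
qed

lemma pv_trunc_tail:
  fixes u :: "real \<Rightarrow> real"
  assumes cont: "continuous_on UNIV u" and bnd: "\<forall>x. \<bar>u x\<bar> \<le> M" and s: "0 < s"
    and \<epsilon>: "0 < \<epsilon>" "\<epsilon> \<le> N"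
  shows "integral {\<epsilon>..N} (\<lambda>h. second_difference u t h * h powr (-(1 + 2 * s)))
      = pv_trunc s u t \<epsilon> - integral {N..} (\<lambda>h. second_difference u t h * h powr (-(1 + 2 * s)))"
    and "\<bar>integral {N..} (\<lambda>h. second_difference u t h * h powr (-(1 + 2 * s)))\<bar>
      \<le> 4 * M * N powr (- (2 * s)) / (2 * s)"
proof -
  have "(\<lambda>h. second_difference u t h * h powr (-(1 + 2 * s))) absolutely_integrable_on {\<epsilon>..}"
    using s \<epsilon> by (intro second_difference_kernel_absolutely_integrable[OF cont bnd]) auto
  note split = absolutely_integrable_atLeast_split[OF this \<epsilon>(2)]
  show "integral {\<epsilon>..N} (\<lambda>h. second_difference u t h * h powr (-(1 + 2 * s)))
      = pv_trunc s u t \<epsilon> - integral {N..} (\<lambda>h. second_difference u t h * h powr (-(1 + 2 * s)))"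
    using split(3) by (simp add: pv_trunc_eq_integral_second_difference[OF cont bnd s \<epsilon>(1)])
  have "\<bar>integral {N..} (\<lambda>h. second_difference u t h * h powr (-(1 + 2 * s)))\<bar>
      \<le> 4 * M * N powr (1 - (1 + 2 * s)) / ((1 + 2 * s) - 1)"
    using split(2) second_difference_bound[OF bnd] s \<epsilon>
    by (intro integral_atLeast_powr_bound) (auto simp: abs_mult mult_right_mono)
  then show "\<bar>integral {N..} (\<lambda>h. second_difference u t h * h powr (-(1 + 2 * s)))\<bar>
      \<le> 4 * M * N powr (- (2 * s)) / (2 * s)"
    by simp
qed

lemma truncated_integral_tendsto_pv:
  fixes u :: "real \<Rightarrow> real"
  assumes cont: "continuous_on UNIV u" and bnd: "\<forall>x. \<bar>u x\<bar> \<le> M" and s: "0 < s"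
    and lim: "(pv_trunc s u t \<longlongrightarrow> L) (at_right 0)"
  shows "(\<lambda>n. integral {1 / (1 + real n)..1 + real n}
      (\<lambda>h. second_difference u t h * h powr (-(1 + 2 * s)))) \<longlonglongrightarrow> L"
proof -
  have N: "filterlim (\<lambda>n. 1 + real n) at_top sequentially"
    by (rule filterlim_tendsto_add_at_top[OF tendsto_const filterlim_real_sequentially])
  have "filterlim (\<lambda>n. 1 / (1 + real n)) (at_right 0) sequentially"
    by (intro tendsto_imp_filterlim_at_right tendsto_divide_0[OF tendsto_const]
        filterlim_at_top_imp_at_infinity[OF N]) auto
  then have pv_lim: "(\<lambda>n. pv_trunc s u t (1 / (1 + real n))) \<longlonglongrightarrow> L"
    by (rule filterlim_compose[OF lim])
  have tail_lim: "(\<lambda>n. integral {1 + real n..}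
      (\<lambda>h. second_difference u t h * h powr (-(1 + 2 * s)))) \<longlonglongrightarrow> 0"
  proof (rule Lim_null_comparison[OF always_eventually])
    have "(\<lambda>n. 4 * M * (1 + real n) powr (- (2 * s)) / (2 * s)) \<longlonglongrightarrow> 4 * M * 0 / (2 * s)"
      using N s by (intro tendsto_intros tendsto_neg_powr) auto
    then show "(\<lambda>n. 4 * M * (1 + real n) powr (- (2 * s)) / (2 * s)) \<longlonglongrightarrow> 0"
      by simp
  qed (use pv_trunc_tail(2)[OF cont bnd s zero_less_one] in auto)
  have "integral {1 / (1 + real n)..1 + real n} (\<lambda>h. second_difference u t h * h powr (-(1 + 2 * s)))
      = pv_trunc s u t (1 / (1 + real n))
        - integral {1 + real n..} (\<lambda>h. second_difference u t h * h powr (-(1 + 2 * s)))" for n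
    by (rule pv_trunc_tail(1)[OF cont bnd s]) (auto simp: field_simps)
  with tendsto_diff[OF pv_lim tail_lim] show ?thesis
    by simp
qed

lemma truncated_integral_bound:
  fixes u u' :: "real \<Rightarrow> real"
  assumes cont: "continuous_on UNIV u" and bnd: "\<forall>x. \<bar>u x\<bar> \<le> M"
    and der: "\<And>x. (u has_real_derivative u' x) (at x)"
    and hol: "\<forall>x\<in>{a..b}. \<forall>y\<in>{a..b}. \<bar>u' x - u' y\<bar> \<le> C * \<bar>x - y\<bar> powr \<beta>" and C: "0 \<le> C"
    and ab: "a \<le> t - 1" "t + 1 \<le> b"
    and \<beta>: "2 * s - 1 < \<beta>" and s: "1/2 < s" and \<epsilon>: "0 < \<epsilon>" "\<epsilon> \<le> 1" "1 \<le> N"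
  shows "\<bar>integral {\<epsilon>..N} (\<lambda>h. second_difference u t h * h powr (-(1 + 2 * s)))\<bar>
      \<le> C * 2 powr \<beta> / (1 + \<beta> - 2 * s) + 4 * M / s"
proof -
  have s0: "0 < s" and \<epsilon>N: "\<epsilon> \<le> N"
    using s \<epsilon> by auto
  have M: "0 \<le> M"
    using bnd by (meson abs_ge_zero order_trans)
  have "N powr (- (2 * s)) \<le> 1"
    using s \<epsilon> powr_mono2'[of "- (2 * s)" 1 N] by simp
  then have "4 * M * N powr (- (2 * s)) / (2 * s) \<le> 4 * M / (2 * s)"
    using M s by (intro divide_right_mono mult_left_le) auto
  then have "\<bar>integral {N..} (\<lambda>h. second_difference u t h * h powr (-(1 + 2 * s)))\<bar> \<le> 4 * M / (2 * s)"
    using pv_trunc_tail(2)[OF cont bnd s0 \<epsilon>(1) \<epsilon>N, where t = t] by linarith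
  moreover have "\<bar>pv_trunc s u t \<epsilon>\<bar> \<le> C * 2 powr \<beta> / (1 + \<beta> - 2 * s) + 4 * M / (2 * s)"
    by (rule pv_trunc_bound[OF cont bnd der hol C ab \<beta> s \<epsilon>(1,2)])
  ultimately show ?thesis
    unfolding pv_trunc_tail(1)[OF cont bnd s0 \<epsilon>(1) \<epsilon>N] by simp
qed

lemma pv_limit_period_integral:
  fixes u u' L :: "real \<Rightarrow> real"
  assumes per: "\<forall>t. u (t + T) = u t" and T: "0 < T"
    and der: "\<And>x. (u has_real_derivative u' x) (at x)"
    and hol: "hoelder_on \<beta> UNIV u'" and \<beta>: "2 * s - 1 < \<beta>" and s: "1/2 < s"
    and lim: "\<And>t. (pv_trunc s u t \<longlongrightarrow> L t) (at_right 0)"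
  shows "(L has_integral 0) {0..T}"
proof -
  have s0: "0 < s"
    using s by simp
  have cont: "continuous_on UNIV u"
    using der by (meson DERIV_isCont continuous_at_imp_continuous_on)
  obtain M where bnd: "\<forall>x. \<bar>u x\<bar> \<le> M"
    using periodic_continuous_bounded[OF per T cont] .
  obtain C where C: "0 \<le> C" "\<forall>x\<in>{-1..T + 1}. \<forall>y\<in>{-1..T + 1}. \<bar>u' x - u' y\<bar> \<le> C * \<bar>x - y\<bar> powr \<beta>"
    using hoelder_on_nonneg_const[OF hol compact_Icc subset_UNIV] .
  define \<epsilon> where "\<epsilon> n = 1 / (1 + real n)" for n :: nat
  have \<epsilon>: "0 < \<epsilon> n" "\<epsilon> n \<le> 1" for n
    unfolding \<epsilon>_def by (auto simp: field_simps)
  \<comment> \<open>Truncating also at \<open>1 + n\<close> makes the integrand continuous on a compact rectangle,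
    so that the period integral and the \<open>h\<close>-integral can be swapped.\<close>
  define f where "f n t = integral {\<epsilon> n..1 + real n} (\<lambda>h. second_difference u t h * h powr (-(1 + 2 * s)))" for n t
  define B where "B = C * 2 powr \<beta> / (1 + \<beta> - 2 * s) + 4 * M / s"
  have f_bound: "norm (f n t) \<le> B" if "t \<in> {0..T}" for n t
    using that \<epsilon>[of n] unfolding f_def B_def real_norm_def
    by (intro truncated_integral_bound[OF cont bnd der C(2) C(1) _ _ \<beta> s]) auto
  have f_lim: "(\<lambda>n. f n t) \<longlonglongrightarrow> L t" for t
    unfolding f_def \<epsilon>_def using lim by (rule truncated_integral_tendsto_pv[OF cont bnd s0])
  have f_int: "(f n has_integral 0) {0..T}" for n
  proof -
    note kernel = period_integral_truncated_kernel[OF per T cont \<epsilon>(1)[of n],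
        where b = "1 + real n" and p = "1 + 2 * s"]
    have "f n integrable_on {0..T}"
      unfolding f_def by (rule integrable_continuous_interval[OF kernel(1)])
    then show ?thesis
      using kernel(2) unfolding f_def by (simp add: has_integral_integrable_integral)
  qed
  have "(\<lambda>_. B) integrable_on {0..T}"
    by (intro integrable_continuous_interval continuous_on_const)
  note convergence = dominated_convergence[OF has_integral_integrable[OF f_int] this f_bound f_lim]
  have "integral {0..T} (f n) = 0" for n
    using f_int by (rule integral_unique)
  then have "integral {0..T} L = 0"
    using convergence(2) by (simp add: LIMSEQ_const_iff)
  then show ?thesis
    using convergence(1) by (simp add: has_integral_integrable_integral)
qed

lemma frac_lap_period_integral:
  fixes u u' :: "real \<Rightarrow> real"
  assumes per: "\<forall>t. u (t + T) = u t" and T: "0 < T"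
    and der: "\<And>x. (u has_real_derivative u' x) (at x)"
    and hol: "hoelder_on \<beta> UNIV u'" and \<beta>: "2 * s - 1 < \<beta>" and s: "1/2 < s"
    and pv: "\<And>t. pv_exists s u t"
  shows "(frac_lap s u has_integral 0) {0..T}"
proof -
  have "(pv_trunc s u t \<longlongrightarrow> Lim (at_right 0) (pv_trunc s u t)) (at_right 0)" for t
    using pv[of t] unfolding pv_exists_def by (metis tendsto_Lim trivial_limit_at_right_real)
  then have "((\<lambda>t. Lim (at_right 0) (pv_trunc s u t)) has_integral 0) {0..T}"
    by (rule pv_limit_period_integral[OF per T der hol \<beta> s])
  then have "((\<lambda>t. C1s s * Lim (at_right 0) (pv_trunc s u t)) has_integral C1s s * 0) {0..T}"
    by (rule has_integral_mult_right)
  then show ?thesis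
    by (simp add: frac_lap_def[abs_def])
qed

section \<open>Period integral of a classical solution\<close>

lemma classical_solution_period_integral:
  fixes u e g :: "real \<Rightarrow> real"
  assumes sol: "classical_solution s \<alpha> c lam g e u" and lam: "lam \<noteq> 0"
    and s: "1/2 < s" "s < 1" and \<alpha>: "0 < \<alpha>" "\<alpha> < 1"
    and per: "\<forall>t. u (t + T) = u t" and T: "0 < T" and e: "e integrable_on {0..T}"
  shows "((\<lambda>t. g (u t)) has_integral - integral {0..T} e) {0..T}"
proof -
  have u: "C_hoelder (2 * s + \<alpha>) u" and pv: "\<And>t. pv_exists s u t"
    and eq: "\<And>t. - frac_lap s u t + c * deriv u t - lam * g (u t) = lam * e t"
    using sol unfolding classical_solution_def by auto
  have r: "1 < 2 * s + \<alpha>" "2 * s + \<alpha> \<le> 3"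
    using s \<alpha> by auto
  note der = C_hoelder_derivative(1)[OF u r] and hol = C_hoelder_derivative(2)[OF u r]
  have "(frac_lap s u has_integral 0) {0..T}"
    using s \<alpha> by (intro frac_lap_period_integral[OF per T der hol _ _ pv]) auto
  moreover have "(deriv u has_integral 0) {0..T}"
    using per T der by (rule periodic_derivative_integral)
  moreover have "(e has_integral integral {0..T} e) {0..T}"
    using e by (rule integrable_integral)
  ultimately have "((\<lambda>t. (c * deriv u t - frac_lap s u t - lam * e t) / lam)
      has_integral (c * 0 - 0 - lam * integral {0..T} e) / lam) {0..T}"
    by (intro has_integral_divide has_integral_diff has_integral_mult_right)
  moreover have "(c * deriv u t - frac_lap s u t - lam * e t) / lam = g (u t)" for t
    using eq[of t] lam by (simp add: field_simps)
  ultimately show ?thesis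
    using lam by simp
qed

lemma large_value_of_negative_integral:
  fixes g u :: "real \<Rightarrow> real"
  assumes int: "((\<lambda>t. g (u t)) has_integral I) S" and I: "I < 0"
    and pos: "\<And>t. t \<in> S \<Longrightarrow> 0 < u t" and g: "\<And>y. 0 < y \<Longrightarrow> y < r \<Longrightarrow> 0 \<le> g y"
  shows "\<exists>t\<in>S. r \<le> u t"
proof (rule ccontr)
  assume "\<not> ?thesis"
  then have "0 \<le> I"
    using pos g by (intro has_integral_nonneg[OF int]) (auto simp: not_le)
  with I show False
    by simp
qed

lemma small_value_of_large_integral:
  fixes g u :: "real \<Rightarrow> real"
  assumes int: "((\<lambda>t. g (u t)) has_integral I) {a..b}" and ab: "a \<le> b" and I: "m * (b - a) < I"
    and g: "\<And>y. R \<le> y \<Longrightarrow> g y \<le> m"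
  shows "\<exists>t\<in>{a..b}. u t < R"
proof (rule ccontr)
  assume "\<not> ?thesis"
  moreover have "((\<lambda>t. m) has_integral m * (b - a)) {a..b}"
    using has_integral_const_real[of m a b] ab by (simp add: mult.commute)
  ultimately have "I \<le> m * (b - a)"
    using g by (intro has_integral_le[OF int]) (auto simp: not_less)
  with I show False
    by simp
qed

lemma filterlim_at_top_at_right_0_nonneg:
  fixes g :: "real \<Rightarrow> real"
  assumes "filterlim g at_top (at_right 0)"
  obtains r where "0 < r" "\<And>y. 0 < y \<Longrightarrow> y < r \<Longrightarrow> 0 \<le> g y"
proof -
  have "\<forall>\<^sub>F y in at_right 0. 0 \<le> g y"
    using assms unfolding filterlim_at_top by blast
  then show ?thesis
    using that unfolding eventually_at_right_field by auto
qed

lemma Limsup_at_top_negative_bound: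
  fixes f :: "real \<Rightarrow> real"
  assumes "Limsup at_top (\<lambda>t. ereal (f t)) < 0"
  obtains l R where "l < 0" "\<And>y. R \<le> y \<Longrightarrow> f y \<le> l"
proof -
  obtain l where l: "Limsup at_top (\<lambda>t. ereal (f t)) < ereal l" "l < 0"
    using ereal_dense2[OF assms] by auto
  then obtain R where "\<And>y. R \<le> y \<Longrightarrow> f y < l"
    using Limsup_lessD[OF l(1)] unfolding eventually_at_top_linorder by auto
  then show ?thesis
    using that l(2) by (meson less_imp_le)
qed

theorem lemma4p7:
  fixes s \<alpha> c :: real and e g :: "real \<Rightarrow> real"
  assumes s: "1/2 < s" "s < 1"
    and \<alpha>: "0 < \<alpha>" "\<alpha> < 1"
    and c: "c > 0"
    and e_hoelder: "hoelder_on \<alpha> UNIV e"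
    and e_per: "\<forall>t. e (t + 2 * pi) = e t"
    and e_mean: "(1 / (2 * pi)) * integral {0..2 * pi} e > 0"
    and g_hoelder: "hoelder_on \<alpha> {0<..} g"
    and G1: "Limsup at_top (\<lambda>t. ereal (g t + (1 / (2 * pi)) * integral {0..2 * pi} e)) < 0"
    and G2: "filterlim g at_top (at_right 0)"
      "\<exists>\<delta>>0. mono_on {0<..<\<delta>} g \<or> antimono_on {0<..<\<delta>} g"
  shows "\<exists>R0 R1. 0 < R0 \<and> R0 < R1 \<and>
    (\<forall>lam u. 0 < lam \<and> lam < 1 \<and> (\<forall>t. u t > 0) \<and> (\<forall>t. u (t + 2 * pi) = u t) \<and>
        classical_solution s \<alpha> c lam g e u \<longrightarrow>
        (\<exists>t0\<in>{0..2 * pi}. \<exists>t1\<in>{0..2 * pi}. u t0 > R0 \<and> u t1 < R1))"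
proof -
  \<comment> \<open>The Hoelder continuity of \<open>e\<close> and \<open>g\<close>, \<open>c > 0\<close> and the monotonicity of \<open>g\<close> near 0 are
    not needed. Integrability of \<open>e\<close> follows from its positive mean, since the integral of a
    non-integrable function is 0.\<close>
  define E where "E = integral {0..2 * pi} e"
  have E: "0 < E"
    using e_mean unfolding E_def by (simp add: zero_less_divide_iff)
  have e_int: "e integrable_on {0..2 * pi}"
    using E not_integrable_integral unfolding E_def by fastforce
  obtain r where r: "0 < r" "\<And>y. 0 < y \<Longrightarrow> y < r \<Longrightarrow> 0 \<le> g y"
    using filterlim_at_top_at_right_0_nonneg[OF G2(1)] by blast
  obtain l R where l: "l < 0" and R: "\<And>y. R \<le> y \<Longrightarrow> g y + 1 / (2 * pi) * E \<le> l"
    using Limsup_at_top_negative_bound[OF G1[folded E_def]] by blast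
  show ?thesis
  proof (intro exI conjI allI impI)
    show "0 < r / 2" "r / 2 < max R r"
      using r by auto
    fix lam and u :: "real \<Rightarrow> real"
    assume "0 < lam \<and> lam < 1 \<and> (\<forall>t. u t > 0) \<and> (\<forall>t. u (t + 2 * pi) = u t) \<and>
      classical_solution s \<alpha> c lam g e u"
    then have g_int: "((\<lambda>t. g (u t)) has_integral - E) {0..2 * pi}" and pos: "\<And>t. 0 < u t"
      using classical_solution_period_integral[of s \<alpha> c lam g e u "2 * pi"] s \<alpha> e_int
      unfolding E_def by auto
    obtain t0 where t0: "t0 \<in> {0..2 * pi}" "r \<le> u t0"
      using large_value_of_negative_integral[of g u _ _ r, OF g_int _ pos r(2)] E by auto
    have "(l - 1 / (2 * pi) * E) * (2 * pi - 0) < - E"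
      using l by (simp add: algebra_simps mult_pos_neg)
    then obtain t1 where t1: "t1 \<in> {0..2 * pi}" "u t1 < R"
      using small_value_of_large_integral[of g u _ _ _ _ R, OF g_int] R by fastforce
    show "\<exists>t0\<in>{0..2 * pi}. \<exists>t1\<in>{0..2 * pi}. r / 2 < u t0 \<and> u t1 < max R r"
      using t0 t1 r by (intro bexI[of _ t0] bexI[of _ t1] conjI) auto
  qed
qed

end
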